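(* Let $s\ge2$. Let $V_0$ be the set of vertices reachable from $v_0=(\mathbf 0,+1)$ in the Markov chain below, and $G_0$ the directed graph on $V_0$ with an edge $v\to v'$ whenever $P(v,v')>0$. Then $V_0$ is finite, $G_0$ is strongly connected, $G_0$ is aperiodic (the greatest common divisor of the lengths of its directed cycles is $1$), and $G_0$ is preserved by the map $\mathcal R(\mathbf u,\sigma)=(\mathbf u,-\sigma)$, i.e. $\mathcal R(V_0)=V_0$.
   Context: Vertices are pairs $(\mathbf u,\sigma)$ with $\mathbf u=(u_\omega)_{\omega\in\{0,1\}^s}\in\mathbb{Z}^{\{0,1\}^s}$ and $\sigma\in\{\pm1\}$. For $\mathbf e=(e_0,\dots,e_s)\in\{0,1\}^{s+1}$ let $\delta(\mathbf u;\mathbf e)_\omega=\lfloor (u_\omega+e_0+\sum_{i=1}^s\omega_ie_i)/2\rfloor$, and $|\mathbf u|=\sum_\omega|u_\omega|$. Transition probabilities: $P((\mathbf u,\sigma),(\mathbf u',\sigma'))=\mathbb{P}_{\mathbf e}(\delta(\mathbf u;\mathbf e)=\mathbf u')$ if $\sigma'=\sigma(-1)^{|\mathbf u|}$, and $0$ otherwise, where $\mathbf e$ is uniformly distributed on $\{0,1\}^{s+1}$. A vertex $v'$ is reachable from $v$ if there is a directed path (possibly of length $0$) from $v$ to $v'$ along edges with positive transition probability. *)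

theory Defs
  imports Complex_Main
begin

text \<open>Indices \<omega> \<in> {0,1}^s are bool lists of length s (\<omega>_i = w!(i-1)).
  A configuration u is a function on bool lists, required (where relevant) to vanish
  outside {0,1}^s.
  The random vector e = (e_0,...,e_s) is a bool list of length s+1.\<close>

definition omegas :: "nat \<Rightarrow> bool list set" where
  "omegas s = {w. length w = s}"

definition evecs :: "nat \<Rightarrow> bool list set" where
  "evecs s = {e. length e = Suc s}"

type_synonym config = "bool list \<Rightarrow> int"
type_synonym vertex = "config \<times> int"

definition delta :: "nat \<Rightarrow> config \<Rightarrow> bool list \<Rightarrow> config" where
  "delta s u e = (\<lambda>w. if length w = s then
      \<lfloor>real_of_int (u w + of_bool (e ! 0) + (\<Sum>i\<in>{1..s}. of_bool (w ! (i - 1)) * of_bool (e ! i))) / 2\<rfloor>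
    else 0)"

definition norm1 :: "nat \<Rightarrow> config \<Rightarrow> int" where
  "norm1 s u = (\<Sum>w\<in>omegas s. \<bar>u w\<bar>)"

definition trans_prob :: "nat \<Rightarrow> vertex \<Rightarrow> vertex \<Rightarrow> real" where
  "trans_prob s v v' = (case v of (u, \<sigma>) \<Rightarrow> case v' of (u', \<sigma>') \<Rightarrow>
     if \<sigma>' = \<sigma> * (-1) ^ nat (norm1 s u)
     then real (card {e \<in> evecs s. delta s u e = u'}) / 2 ^ (Suc s)
     else 0)"

definition edge :: "nat \<Rightarrow> vertex \<Rightarrow> vertex \<Rightarrow> bool" where
  "edge s v v' \<longleftrightarrow> trans_prob s v v' > 0"

definition v0 :: vertex where
  "v0 = ((\<lambda>_. 0), 1)"

definition V0 :: "nat \<Rightarrow> vertex set" where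
  "V0 s = {v. (edge s)\<^sup>*\<^sup>* v0 v}"

definition strongly_connected_on :: "nat \<Rightarrow> vertex set \<Rightarrow> bool" where
  "strongly_connected_on s V \<longleftrightarrow>
     (\<forall>v\<in>V. \<forall>v'\<in>V. \<exists>p. p \<noteq> [] \<and> hd p = v \<and> last p = v' \<and> set p \<subseteq> V \<and>
        (\<forall>i. Suc i < length p \<longrightarrow> edge s (p ! i) (p ! Suc i)))"

definition dir_cycle :: "nat \<Rightarrow> vertex set \<Rightarrow> vertex list \<Rightarrow> bool" where
  "dir_cycle s V xs \<longleftrightarrow> xs \<noteq> [] \<and> distinct xs \<and> set xs \<subseteq> V \<and>
     (\<forall>i < length xs. edge s (xs ! i) (xs ! (Suc i mod length xs)))"

definition aperiodic_on :: "nat \<Rightarrow> vertex set \<Rightarrow> bool" where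
  "aperiodic_on s V \<longleftrightarrow> Gcd {length xs | xs. dir_cycle s V xs} = 1"

definition R :: "vertex \<Rightarrow> vertex" where
  "R v = (fst v, - snd v)"

end

theory Submission
  imports Defs
begin

(* Every coordinate of a reachable configuration stays in {0..s}, so V0 is finite. Choosing
   e = 0 halves all coordinates, so from any reachable vertex the zero configuration is reached
   within s steps. From (0, sigma) the chain 0 -> A_1 -> ... -> A_s -> 0, where A_k is the
   indicator of {omega. omega_1 = ... = omega_k = 1}, returns with the sign flipped, because
   |A_k| = 2^(s-k) is odd only for k = s. Hence every reachable vertex leads back to v0, the
   loop at v0 (e = 0) gives aperiodicity, and since R is an automorphism of the graph mapping
   v0 to the reachable vertex (0, -1), it maps V0 onto itself. *)

lemma rtranclp_imp_path:
  assumes "r\<^sup>*\<^sup>* a b"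
  shows "\<exists>p. p \<noteq> [] \<and> hd p = a \<and> last p = b \<and> set p \<subseteq> {x. r\<^sup>*\<^sup>* a x} \<and>
           (\<forall>i. Suc i < length p \<longrightarrow> r (p ! i) (p ! Suc i))"
  using assms
proof (induction rule: converse_rtranclp_induct)
  case base
  show ?case by (intro exI[of _ "[b]"]) auto
next
  case (step a y)
  then obtain p where p: "p \<noteq> []" "hd p = y" "last p = b" "set p \<subseteq> {x. r\<^sup>*\<^sup>* y x}"
    and path: "\<forall>i. Suc i < length p \<longrightarrow> r (p ! i) (p ! Suc i)"
    by blast
  have "r ((a # p) ! i) ((a # p) ! Suc i)" if "Suc i < length (a # p)" for i
  proof (cases i)
    case 0
    then show ?thesis using p(1,2) step.hyps(1) by (simp add: hd_conv_nth)
  next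
    case (Suc j)
    then show ?thesis using path that by simp
  qed
  moreover have "set (a # p) \<subseteq> {x. r\<^sup>*\<^sup>* a x}"
    using p(4) converse_rtranclp_into_rtranclp[of r a y, OF step.hyps(1)] by auto
  ultimately show ?case using p(1-3) by (intro exI[of _ "a # p"]) auto
qed

lemma rtranclp_hom:
  assumes "\<And>x y. r x y \<Longrightarrow> r (f x) (f y)" and "r\<^sup>*\<^sup>* a b"
  shows "r\<^sup>*\<^sup>* (f a) (f b)"
  using assms(2)
proof induction
  case (step y z)
  then show ?case by (meson assms(1) rtranclp.rtrancl_into_rtrancl)
qed simp

lemma involution_image_reachable:
  assumes hom: "\<And>x y. r x y \<Longrightarrow> r (f x) (f y)" and inv: "\<And>x. f (f x) = x"
    and "r\<^sup>*\<^sup>* a (f a)"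
  shows "f ` {x. r\<^sup>*\<^sup>* a x} = {x. r\<^sup>*\<^sup>* a x}"
proof -
  have closed: "r\<^sup>*\<^sup>* a (f x)" if "r\<^sup>*\<^sup>* a x" for x
    using \<open>r\<^sup>*\<^sup>* a (f a)\<close> rtranclp_hom[OF hom that] by (rule rtranclp_trans)
  show ?thesis
  proof (intro equalityI subsetI)
    fix x assume "x \<in> {x. r\<^sup>*\<^sup>* a x}"
    then have "f x \<in> {x. r\<^sup>*\<^sup>* a x}" using closed by simp
    then show "x \<in> f ` {x. r\<^sup>*\<^sup>* a x}" using inv[of x] by (metis image_eqI)
  qed (use closed in auto)
qed

lemma strongly_connected_on_reachable:
  assumes "\<And>v. (edge s)\<^sup>*\<^sup>* x v \<Longrightarrow> (edge s)\<^sup>*\<^sup>* v x"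
  shows "strongly_connected_on s {v. (edge s)\<^sup>*\<^sup>* x v}"
  unfolding strongly_connected_on_def
proof (intro ballI)
  fix v v' assume "v \<in> {v. (edge s)\<^sup>*\<^sup>* x v}" and "v' \<in> {v. (edge s)\<^sup>*\<^sup>* x v}"
  then have xv: "(edge s)\<^sup>*\<^sup>* x v" and xv': "(edge s)\<^sup>*\<^sup>* x v'" by simp_all
  obtain p where p: "p \<noteq> []" "hd p = v" "last p = v'" "set p \<subseteq> {y. (edge s)\<^sup>*\<^sup>* v y}"
    and path: "\<forall>i. Suc i < length p \<longrightarrow> edge s (p ! i) (p ! Suc i)"
    using rtranclp_imp_path[OF rtranclp_trans[OF assms[OF xv] xv']] by blast
  have "set p \<subseteq> {v. (edge s)\<^sup>*\<^sup>* x v}" using p(4) rtranclp_trans[OF xv] by blast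
  then show "\<exists>p. p \<noteq> [] \<and> hd p = v \<and> last p = v' \<and> set p \<subseteq> {v. (edge s)\<^sup>*\<^sup>* x v} \<and>
      (\<forall>i. Suc i < length p \<longrightarrow> edge s (p ! i) (p ! Suc i))"
    using p(1-3) path by blast
qed

lemma aperiodic_on_if_loop:
  assumes "v \<in> V" and "edge s v v"
  shows "aperiodic_on s V"
proof -
  have "dir_cycle s V [v]" using assms by (simp add: dir_cycle_def)
  then have "Gcd {length xs | xs. dir_cycle s V xs} dvd 1" by (intro Gcd_dvd) force
  then show ?thesis by (simp add: aperiodic_on_def)
qed

lemma edge_iff:
  "edge s (u, \<sigma>) (u', \<sigma>') \<longleftrightarrow>
     \<sigma>' = \<sigma> * (-1) ^ nat (norm1 s u) \<and> (\<exists>e\<in>evecs s. delta s u e = u')"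
proof -
  have "finite (evecs s)"
    unfolding evecs_def using finite_lists_length_eq[of "UNIV :: bool set"] by simp
  then have "card {e \<in> evecs s. delta s u e = u'} > 0 \<longleftrightarrow> (\<exists>e\<in>evecs s. delta s u e = u')"
    by (subst card_gt_0_iff) auto
  then show ?thesis
    unfolding edge_def trans_prob_def by auto
qed

lemma edge_sign:
  assumes "edge s (u, \<sigma>) (u', \<sigma>')"
  shows "\<sigma>' = \<sigma> \<or> \<sigma>' = - \<sigma>"
  using assms by (cases "even (nat (norm1 s u))") (auto simp: edge_iff)

lemma delta_eq_div:
  "delta s u e w = (if length w = s then
     (u w + of_bool (e ! 0) + (\<Sum>i\<in>{1..s}. of_bool (w ! (i - 1)) * of_bool (e ! i))) div 2 else 0)"
proof -
  have floor_half: "\<lfloor>real_of_int x / 2\<rfloor> = x div 2" for x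
    using floor_divide_of_int_eq[of x 2] by simp
  show ?thesis unfolding delta_def floor_half ..
qed

lemma delta_zero_evec:
  "delta s u (replicate (Suc s) False) w = (if length w = s then u w div 2 else 0)"
proof -
  have "(\<Sum>i\<in>{1..s}. of_bool (w ! (i - 1)) * of_bool (replicate (Suc s) False ! i) :: int) = 0"
    by (rule sum.neutral) (simp del: replicate_Suc)
  then show ?thesis by (simp add: delta_eq_div del: replicate_Suc)
qed

definition unit_evec :: "nat \<Rightarrow> bool \<Rightarrow> nat \<Rightarrow> bool list" where
  "unit_evec s c k = map (\<lambda>i. if i = 0 then c else i = Suc k) [0..<Suc s]"

lemma unit_evec_in_evecs: "unit_evec s c k \<in> evecs s"
  by (simp add: unit_evec_def evecs_def)

lemma delta_unit_evec:
  assumes "k < s"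
  shows "delta s u (unit_evec s c k) w =
           (if length w = s then (u w + of_bool c + of_bool (w ! k)) div 2 else 0)"
proof -
  have e: "unit_evec s c k ! i = (if i = 0 then c else i = Suc k)" if "i \<le> s" for i
    using that by (simp add: unit_evec_def nth_upt del: upt_Suc)
  have "(\<Sum>i\<in>{1..s}. of_bool (w ! (i - 1)) * of_bool (unit_evec s c k ! i) :: int)
      = (\<Sum>i\<in>{1..s}. if i = Suc k then of_bool (w ! k) else 0)"
    by (rule sum.cong) (auto simp: e)
  also have "\<dots> = of_bool (w ! k)" using assms by simp
  finally show ?thesis using e[of 0] by (simp add: delta_eq_div)
qed

definition bounded_config :: "nat \<Rightarrow> config \<Rightarrow> bool" where
  "bounded_config s u \<longleftrightarrow> (\<forall>w. length w \<noteq> s \<longrightarrow> u w = 0) \<and> (\<forall>w. 0 \<le> u w \<and> u w \<le> int s)"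

lemma bounded_config_delta:
  assumes "bounded_config s u"
  shows "bounded_config s (delta s u e)"
proof -
  have "0 \<le> delta s u e w \<and> delta s u e w \<le> int s" for w
  proof -
    let ?S = "\<Sum>i\<in>{1..s}. of_bool (w ! (i - 1)) * of_bool (e ! i) :: int"
    have "0 \<le> ?S" by (rule sum_nonneg) simp
    moreover have "?S \<le> int s"
      using sum_bounded_above[of "{1..s}" "\<lambda>i. of_bool (w ! (i - 1)) * of_bool (e ! i) :: int" 1]
      by simp
    moreover have "0 \<le> u w" "u w \<le> int s" using assms by (simp_all add: bounded_config_def)
    ultimately show ?thesis by (simp add: delta_eq_div) linarith
  qed
  then show ?thesis by (simp add: bounded_config_def delta_eq_div)
qed

lemma finite_bounded_configs: "finite {u. bounded_config s u}"
proof (rule finite_subset)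
  show "{u. bounded_config s u} \<subseteq>
          {f. \<forall>x. (x \<in> omegas s \<longrightarrow> f x \<in> {0..int s}) \<and> (x \<notin> omegas s \<longrightarrow> f x = 0)}"
    by (auto simp: bounded_config_def omegas_def)
  show "finite \<dots>"
    using finite_lists_length_eq[of "UNIV :: bool set" s]
    by (intro finite_set_of_finite_funs) (simp_all add: omegas_def)
qed

lemma V0_invariant:
  assumes "v \<in> V0 s"
  shows "bounded_config s (fst v) \<and> snd v \<in> {-1, 1}"
proof -
  have "(edge s)\<^sup>*\<^sup>* v0 v" using assms by (simp add: V0_def)
  then show ?thesis
  proof (induction rule: rtranclp_induct)
    case base
    show ?case by (simp add: v0_def bounded_config_def)
  next
    case (step v v')
    obtain u \<sigma> u' \<sigma>' where v: "v = (u, \<sigma>)" and v': "v' = (u', \<sigma>')" by force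
    from step.hyps(2) obtain e where "delta s u e = u'" by (auto simp: v v' edge_iff)
    then have "bounded_config s u'" using step.IH bounded_config_delta v by auto
    moreover have "\<sigma>' = \<sigma> \<or> \<sigma>' = - \<sigma>" using edge_sign step.hyps(2) v v' by simp
    ultimately show ?case using step.IH v v' by auto
  qed
qed

definition prefix_indicator :: "nat \<Rightarrow> nat \<Rightarrow> config" where
  "prefix_indicator s k = (\<lambda>w. of_bool (length w = s \<and> (\<forall>i<k. w ! i)))"

lemma card_lists_with_true_prefix:
  assumes "k \<le> s"
  shows "card {w :: bool list. length w = s \<and> (\<forall>i<k. w ! i)} = 2 ^ (s - k)"
proof -
  have "{w :: bool list. length w = s \<and> (\<forall>i<k. w ! i)} =
          (\<lambda>v. replicate k True @ v) ` {v. length v = s - k}"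
  proof (intro equalityI subsetI)
    fix w :: "bool list" assume w: "w \<in> {w. length w = s \<and> (\<forall>i<k. w ! i)}"
    then have "take k w = replicate k True" using assms by (auto intro: nth_equalityI)
    then have "w = replicate k True @ drop k w" by (metis append_take_drop_id)
    then show "w \<in> (\<lambda>v. replicate k True @ v) ` {v. length v = s - k}"
      using w by (intro image_eqI[of _ _ "drop k w"]) auto
  qed (use assms in \<open>auto simp: nth_append\<close>)
  moreover have "card {v :: bool list. length v = s - k} = 2 ^ (s - k)"
    using card_lists_length_eq[of "UNIV :: bool set" "s - k"] by simp
  ultimately show ?thesis by (simp add: card_image inj_on_def)
qed

lemma norm1_prefix_indicator:
  assumes "k \<le> s"
  shows "norm1 s (prefix_indicator s k) = 2 ^ (s - k)"
proof -
  have "norm1 s (prefix_indicator s k) = (\<Sum>w\<in>omegas s. of_bool (\<forall>i<k. w ! i))"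
    unfolding norm1_def prefix_indicator_def by (rule sum.cong) (auto simp: omegas_def)
  also have "\<dots> = int (card {w :: bool list. length w = s \<and> (\<forall>i<k. w ! i)})"
    using finite_lists_length_eq[of "UNIV :: bool set" s]
    by (simp add: omegas_def Int_def conj_commute)
  finally show ?thesis using card_lists_with_true_prefix[OF assms] by simp
qed

lemma edge_zero_prefix_indicator:
  assumes "1 \<le> s"
  shows "edge s ((\<lambda>_. 0), \<sigma>) (prefix_indicator s 1, \<sigma>)"
proof -
  have "delta s (\<lambda>_. 0) (unit_evec s True 0) = prefix_indicator s 1"
    using assms by (auto simp: delta_unit_evec prefix_indicator_def)
  moreover have "norm1 s (\<lambda>_. 0) = 0" by (simp add: norm1_def)
  ultimately show ?thesis using unit_evec_in_evecs by (auto simp: edge_iff)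
qed

lemma edge_prefix_indicator_Suc:
  assumes "k < s"
  shows "edge s (prefix_indicator s k, \<sigma>) (prefix_indicator s (Suc k), \<sigma>)"
proof -
  have "delta s (prefix_indicator s k) (unit_evec s False k) = prefix_indicator s (Suc k)"
    using assms by (auto simp: delta_unit_evec prefix_indicator_def less_Suc_eq)
  moreover have "even (nat (norm1 s (prefix_indicator s k)))"
    using assms by (simp add: norm1_prefix_indicator nat_power_eq)
  ultimately show ?thesis using unit_evec_in_evecs by (auto simp: edge_iff)
qed

lemma edge_prefix_indicator_zero:
  "edge s (prefix_indicator s s, \<sigma>) ((\<lambda>_. 0), - \<sigma>)"
proof -
  have "delta s (prefix_indicator s s) (replicate (Suc s) False) = (\<lambda>_. 0)"
    by (rule ext) (simp add: delta_zero_evec prefix_indicator_def del: replicate_Suc)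
  moreover have "replicate (Suc s) False \<in> evecs s" by (simp add: evecs_def)
  ultimately show ?thesis by (auto simp: edge_iff norm1_prefix_indicator)
qed

lemma prefix_indicator_chain:
  assumes "j \<le> k" and "k \<le> s"
  shows "(edge s)\<^sup>*\<^sup>* (prefix_indicator s j, \<sigma>) (prefix_indicator s k, \<sigma>)"
  using assms(1)
proof (induction k rule: dec_induct)
  case (step n)
  then have "n < s" using assms(2) by simp
  with step.IH show ?case by (meson edge_prefix_indicator_Suc rtranclp.rtrancl_into_rtrancl)
qed simp

lemma zero_config_flip:
  assumes "1 \<le> s"
  shows "(edge s)\<^sup>*\<^sup>* ((\<lambda>_. 0), \<sigma>) ((\<lambda>_. 0), - \<sigma>)"
proof -
  have "(edge s)\<^sup>*\<^sup>* ((\<lambda>_. 0), \<sigma>) (prefix_indicator s 1, \<sigma>)"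
    using edge_zero_prefix_indicator[OF assms] by blast
  also have "(edge s)\<^sup>*\<^sup>* \<dots> (prefix_indicator s s, \<sigma>)"
    using prefix_indicator_chain assms by blast
  also have "(edge s)\<^sup>*\<^sup>* \<dots> ((\<lambda>_. 0), - \<sigma>)"
    using edge_prefix_indicator_zero by blast
  finally show ?thesis .
qed

lemma edge_zero_config_loop: "edge s ((\<lambda>_. 0), \<sigma>) ((\<lambda>_. 0), \<sigma>)"
proof -
  have "delta s (\<lambda>_. 0) (replicate (Suc s) False) = (\<lambda>_. 0)"
    by (rule ext) (simp add: delta_zero_evec del: replicate_Suc)
  moreover have "replicate (Suc s) False \<in> evecs s" by (simp add: evecs_def)
  moreover have "norm1 s (\<lambda>_. 0) = 0" by (simp add: norm1_def)
  ultimately show ?thesis by (auto simp: edge_iff)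
qed

lemma halving_reaches_zero_config:
  assumes "1 \<le> s" and "\<forall>w. length w \<noteq> s \<longrightarrow> u w = 0" and "\<forall>w. 0 \<le> u w \<and> u w < 2 ^ n"
  shows "(edge s)\<^sup>*\<^sup>* (u, \<sigma>) ((\<lambda>_. 0), \<sigma>)"
  using assms(2,3)
proof (induction n arbitrary: u \<sigma>)
  case 0
  then have "u w = 0" for w by (metis int_one_le_iff_zero_less not_le order.antisym power_0)
  then have "u = (\<lambda>_. 0)" by auto
  then show ?case by simp
next
  case (Suc n)
  define u' where "u' = delta s u (replicate (Suc s) False)"
  define \<sigma>' where "\<sigma>' = \<sigma> * (-1) ^ nat (norm1 s u)"
  have step: "edge s (u, \<sigma>) (u', \<sigma>')"
    unfolding edge_iff u'_def \<sigma>'_def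
    by (intro conjI refl bexI[of _ "replicate (Suc s) False"]) (simp add: evecs_def del: replicate_Suc)
  have half: "0 \<le> x div 2 \<and> x div 2 < m" if "0 \<le> x" "x < 2 * m" for x m :: int
    using that by linarith
  have "\<forall>w. length w \<noteq> s \<longrightarrow> u' w = 0" "\<forall>w. 0 \<le> u' w \<and> u' w < 2 ^ n"
    using Suc.prems half by (auto simp: u'_def delta_zero_evec simp del: replicate_Suc)
  then have "(edge s)\<^sup>*\<^sup>* (u', \<sigma>') ((\<lambda>_. 0), \<sigma>')" by (rule Suc.IH)
  moreover have "(edge s)\<^sup>*\<^sup>* ((\<lambda>_. 0), \<sigma>') ((\<lambda>_. 0), \<sigma>)"
    using edge_sign[OF step] zero_config_flip[OF assms(1), of "- \<sigma>"] by auto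
  ultimately show ?case using step by (meson converse_rtranclp_into_rtranclp rtranclp_trans)
qed

lemma V0_reaches_v0:
  assumes "1 \<le> s" and "v \<in> V0 s"
  shows "(edge s)\<^sup>*\<^sup>* v v0"
proof -
  obtain u \<sigma> where v: "v = (u, \<sigma>)" by force
  have u: "bounded_config s u" and \<sigma>: "\<sigma> \<in> {-1, 1}" using V0_invariant[OF assms(2)] v by auto
  have "int s < 2 ^ s" using less_exp[of s] by (metis of_nat_less_iff of_nat_numeral of_nat_power)
  then have "\<forall>w. 0 \<le> u w \<and> u w < 2 ^ s" using u by (auto simp: bounded_config_def intro: le_less_trans)
  moreover have "\<forall>w. length w \<noteq> s \<longrightarrow> u w = 0" using u by (simp add: bounded_config_def)
  ultimately have "(edge s)\<^sup>*\<^sup>* (u, \<sigma>) ((\<lambda>_. 0), \<sigma>)"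
    using halving_reaches_zero_config[OF assms(1)] by blast
  moreover have "(edge s)\<^sup>*\<^sup>* ((\<lambda>_. 0), \<sigma>) v0"
    using \<sigma> zero_config_flip[OF assms(1), of "-1"] by (auto simp: v0_def)
  ultimately show ?thesis using v by (meson rtranclp_trans)
qed

lemma edge_R: "edge s v v' \<Longrightarrow> edge s (R v) (R v')"
  by (cases v; cases v') (simp add: R_def edge_iff)

theorem proposition2p3:
  fixes s :: nat
  assumes "s \<ge> 2"
  shows "finite (V0 s) \<and> strongly_connected_on s (V0 s) \<and> aperiodic_on s (V0 s)
         \<and> R ` (V0 s) = V0 s"
proof (intro conjI)
  have s: "1 \<le> s" using assms by simp
  have "V0 s \<subseteq> {u. bounded_config s u} \<times> {-1, 1}" using V0_invariant by force
  then show "finite (V0 s)" by (rule finite_subset) (simp add: finite_bounded_configs)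
  show "strongly_connected_on s (V0 s)"
    unfolding V0_def using V0_reaches_v0[OF s]
    by (intro strongly_connected_on_reachable) (simp add: V0_def)
  show "aperiodic_on s (V0 s)"
    using edge_zero_config_loop by (intro aperiodic_on_if_loop[of v0]) (simp_all add: V0_def v0_def)
  have "(edge s)\<^sup>*\<^sup>* v0 (R v0)" using zero_config_flip[OF s, of 1] by (simp add: v0_def R_def)
  then show "R ` V0 s = V0 s"
    unfolding V0_def using edge_R by (intro involution_image_reachable) (simp_all add: R_def)
qed

end
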